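(* Let $\rho>0$ and suppose that, for each value of $c^S>0$, the variable-window IPT thresholds satisfy $c_n^D=0$ for all $n\leq(1+\rho)\frac{c^S}{\underline{q}}$ (the values $c_n^D\geq0$ for larger $n$ being arbitrary). Then for every $f_1\in\mathcal{P}_1$, $$\limsup_{c^S\to\infty}\frac{E_{f_1,1}t_I}{c^S}\leq\frac{1}{q(f_1)}.$$
   Context: Setup. Let $\mathcal{A}=\{a_1,\dots,a_m\}$ be a finite alphabet and $\mathcal{P}$ the set of probability mass functions (p.m.f.s) on $\mathcal{A}$. $I(f\|f')=\sum_{a}f(a)\log\frac{f(a)}{f'(a)}$ is the Kullback–Leibler divergence. A known pre-change p.m.f. $f_0\in\mathcal{P}$ is fixed. $q:\mathcal{P}\to\mathbb{R}$ is quasiconcave and $L$-Lipschitz with respect to $\ell_1$, with $q_0:=q(f_0)<0<\underline{q}$, and the set of possible post-change p.m.f.s $\mathcal{P}_1$ is a nonempty subset of $\{f: q(f)\geq\underline{q}\}$. Under $P_{f_1,1}$ (expectation $E_{f_1,1}$) the observations $X_1,X_2,\dots$ are i.i.d. $f_1$. For $i\leq j$, $\hat f_{X_i^j}$ is the empirical p.m.f. of $X_i,\dots,X_j$. Variable-window IPT. Parameters: $c^S>0$ and a sequence $(c_n^D)_{n\geq1}$ of nonnegative thresholds. For $n\geq1$ let $f_n^*=\arg\min_{f\in\mathcal{P}:\,q(f)\geq c^S/n}I(f\|f_0)$. Put $Q(i,j)=(j-i+1)q(\hat f_{X_i^j})$ for $i\leq j$ and $Q(j+1,j)=0$. Set $\tau_1=1$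 and for $k\geq1$: $S_k=\max_{\tau_k\leq i\leq k+1}Q(i,k)$, with $i_k$ a maximizing index and $n_k=k-i_k+1$; $D_k=I(\hat f_{X_{i_k}^k}\|f_{n_k}^* )$; $\tau_{k+1}=k+1$ if $S_k\geq c^S$ and $D_k<c^D_{n_k}$ (restart), and $\tau_{k+1}=\tau_k$ otherwise. The IPT stopping time is $t_I=\inf\{k: S_k\geq c^S\text{ and }D_k\geq c^D_{n_k}\}$. *)

theory Defs
  imports "HOL-Probability.Probability"
begin

definition pmfs :: "('a::finite \<Rightarrow> real) set" where
  "pmfs = {f. (\<forall>a. 0 \<le> f a) \<and> (\<Sum>a\<in>UNIV. f a) = 1}"

definition KL :: "('a::finite \<Rightarrow> real) \<Rightarrow> ('a \<Rightarrow> real) \<Rightarrow> ereal" where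
  "KL f g = (\<Sum>a\<in>UNIV. if f a = 0 then 0
                         else if g a = 0 then \<infinity>
                         else ereal (f a * ln (f a / g a)))"

definition l1dist :: "('a::finite \<Rightarrow> real) \<Rightarrow> ('a \<Rightarrow> real) \<Rightarrow> real" where
  "l1dist f g = (\<Sum>a\<in>UNIV. \<bar>f a - g a\<bar>)"

definition quasiconcave_on_pmfs :: "(('a::finite \<Rightarrow> real) \<Rightarrow> real) \<Rightarrow> bool" where
  "quasiconcave_on_pmfs q \<longleftrightarrow>
     (\<forall>f\<in>pmfs. \<forall>g\<in>pmfs. \<forall>t::real. 0 \<le> t \<and> t \<le> 1 \<longrightarrow>
        min (q f) (q g) \<le> q (\<lambda>a. (1 - t) * f a + t * g a))"

definition lipschitz_l1_on_pmfs :: "real \<Rightarrow> (('a::finite \<Rightarrow> real) \<Rightarrow> real) \<Rightarrow> bool" where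
  "lipschitz_l1_on_pmfs L q \<longleftrightarrow> (\<forall>f\<in>pmfs. \<forall>g\<in>pmfs. \<bar>q f - q g\<bar> \<le> L * l1dist f g)"

text \<open>Observations are a path \<omega> :: nat => 'a; X_t = \<omega> t for t >= 1 (\<omega> 0 is unused).
  Empirical p.m.f. of X_i, ..., X_j.\<close>
definition emp :: "(nat \<Rightarrow> 'a::finite) \<Rightarrow> nat \<Rightarrow> nat \<Rightarrow> 'a \<Rightarrow> real" where
  "emp \<omega> i j a = real (card {t\<in>{i..j}. \<omega> t = a}) / real (Suc j - i)"

definition Qstat :: "(('a::finite \<Rightarrow> real) \<Rightarrow> real) \<Rightarrow> (nat \<Rightarrow> 'a) \<Rightarrow> nat \<Rightarrow> nat \<Rightarrow> real" where
  "Qstat q \<omega> i j = (if i \<le> j then real (Suc j - i) * q (emp \<omega> i j) else 0)"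

text \<open>Maximizing index i_k given the current window start tau (ties broken by the
  smallest index, i.e. the longest window).\<close>
definition imax :: "(('a::finite \<Rightarrow> real) \<Rightarrow> real) \<Rightarrow> (nat \<Rightarrow> 'a) \<Rightarrow> nat \<Rightarrow> nat \<Rightarrow> nat" where
  "imax q \<omega> tau k = (LEAST i. tau \<le> i \<and> i \<le> Suc k \<and>
       (\<forall>j. tau \<le> j \<and> j \<le> Suc k \<longrightarrow> Qstat q \<omega> j k \<le> Qstat q \<omega> i k))"

definition Sstat where "Sstat q \<omega> tau k = Qstat q \<omega> (imax q \<omega> tau k) k"
definition nstat where "nstat q \<omega> tau k = Suc k - imax q \<omega> tau k"
definition Dstat :: "(('a::finite \<Rightarrow> real) \<Rightarrow> real) \<Rightarrow> (nat \<Rightarrow> 'a \<Rightarrow> real) \<Rightarrow> (nat \<Rightarrow> 'a) \<Rightarrow> nat \<Rightarrow> nat \<Rightarrow> ereal" where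
  "Dstat q fstar \<omega> tau k = KL (emp \<omega> (imax q \<omega> tau k) k) (fstar (nstat q \<omega> tau k))"

text \<open>Window starts: ipt_tau ... k = tau_k for k >= 1 (value at 0 is a dummy).\<close>
primrec ipt_tau :: "(('a::finite \<Rightarrow> real) \<Rightarrow> real) \<Rightarrow> (nat \<Rightarrow> 'a \<Rightarrow> real) \<Rightarrow> real \<Rightarrow> (nat \<Rightarrow> real)
     \<Rightarrow> (nat \<Rightarrow> 'a) \<Rightarrow> nat \<Rightarrow> nat" where
  "ipt_tau q fstar cS cD \<omega> 0 = 1"
| "ipt_tau q fstar cS cD \<omega> (Suc k) =
     (if k = 0 then 1
      else (let tau = ipt_tau q fstar cS cD \<omega> k in
            if cS \<le> Sstat q \<omega> tau k \<and> Dstat q fstar \<omega> tau k < ereal (cD (nstat q \<omega> tau k))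
            then Suc k else tau))"

definition ipt_alarm where
  "ipt_alarm q fstar cS cD \<omega> k \<longleftrightarrow> (let tau = ipt_tau q fstar cS cD \<omega> k in
      cS \<le> Sstat q \<omega> tau k \<and> ereal (cD (nstat q \<omega> tau k)) \<le> Dstat q fstar \<omega> tau k)"

definition ipt_time :: "(('a::finite \<Rightarrow> real) \<Rightarrow> real) \<Rightarrow> (nat \<Rightarrow> 'a \<Rightarrow> real) \<Rightarrow> real \<Rightarrow> (nat \<Rightarrow> real)
     \<Rightarrow> (nat \<Rightarrow> 'a) \<Rightarrow> enat" where
  "ipt_time q fstar cS cD \<omega> =
     (if \<exists>k\<ge>1. ipt_alarm q fstar cS cD \<omega> k
      then enat (LEAST k. 1 \<le> k \<and> ipt_alarm q fstar cS cD \<omega> k) else \<infinity>)"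

definition obs_law :: "('a::finite \<Rightarrow> real) \<Rightarrow> (nat \<Rightarrow> 'a) measure" where
  "obs_law f1 = PiM UNIV (\<lambda>_. measure_pmf (embed_pmf f1))"

definition is_fstar :: "(('a::finite \<Rightarrow> real) \<Rightarrow> real) \<Rightarrow> ('a \<Rightarrow> real) \<Rightarrow> real \<Rightarrow> nat \<Rightarrow> ('a \<Rightarrow> real) \<Rightarrow> bool" where
  "is_fstar q f0 cS n f \<longleftrightarrow> f \<in> pmfs \<and> cS / real n \<le> q f \<and>
      (\<forall>g\<in>pmfs. cS / real n \<le> q g \<longrightarrow> KL f f0 \<le> KL g f0)"

end

theory Submission
  imports Defs "HOL-Real_Asymp.Real_Asymp"
begin

text \<open>Fix \<open>c < q(f\<^sub>1)\<close> and windows of length \<open>T = \<lceil>c\<^sup>S/c\<rceil>\<close>. By Lipschitz continuity of \<open>q\<close>, a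
  window whose empirical p.m.f. is uniformly close to \<open>f\<^sub>1\<close> has \<open>Q \<ge> c\<^sup>S\<close>, and by Hoeffding's
  inequality a window fails to be close with probability \<open>\<beta>\<close> exponentially small in \<open>T\<close>.
  Since \<open>c\<^sup>D\<^sub>n = 0\<close> for \<open>n \<le> (1+\<rho>)c\<^sup>S/qbar\<close> and \<open>D \<ge> 0\<close>, windows not longer than \<open>T\<close> never cause a
  restart, so a window with \<open>Q \<ge> c\<^sup>S\<close> starting at a restart point raises the alarm at its end.
  Hence \<open>t\<^sub>I \<le> T\<close> if the first window is good, and \<open>t\<^sub>I \<le> T + 2(2T+1)j\<close> if \<open>j\<close> is the first
  block of length \<open>2T+1\<close> whose windows starting in its first \<open>T+1\<close> positions are all good.
  The blocks are independent, so \<open>E t\<^sub>I \<le> T + O(T\<beta>)\<close> and \<open>limsup E t\<^sub>I/c\<^sup>S \<le> 1/c\<close>; finally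
  let \<open>c \<rightarrow> q(f\<^sub>1)\<close>.\<close>

lemma KL_nonneg:
  assumes f: "f \<in> pmfs" and g: "g \<in> pmfs"
  shows "0 \<le> KL f g"
proof -
  have "(\<Sum>a\<in>UNIV. ereal (f a - g a)) \<le> KL f g"
    unfolding KL_def
  proof (rule sum_mono)
    fix a :: 'a
    have f0: "0 \<le> f a" and g0: "0 \<le> g a" using f g by (auto simp: pmfs_def)
    show "ereal (f a - g a) \<le> (if f a = 0 then 0 else if g a = 0 then \<infinity> else ereal (f a * ln (f a / g a)))"
    proof (cases "f a = 0 \<or> g a = 0")
      case True
      then show ?thesis using g0 by auto
    next
      case False
      then have fp: "0 < f a" and gp: "0 < g a" using f0 g0 by auto
      have "f a * ln (g a / f a) \<le> f a * (g a / f a - 1)"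
        using fp gp by (intro mult_left_mono ln_le_minus_one) auto
      also have "\<dots> = g a - f a" using fp by (simp add: field_simps)
      finally have "f a - g a \<le> f a * ln (f a / g a)"
        using fp gp by (simp add: ln_div right_diff_distrib)
      then show ?thesis using False by simp
    qed
  qed
  also have "(\<Sum>a\<in>UNIV. ereal (f a - g a)) = ereal ((\<Sum>a\<in>UNIV. f a) - (\<Sum>a\<in>UNIV. g a))"
    by (simp add: sum_subtractf)
  also have "\<dots> = 0" using f g by (simp add: pmfs_def)
  finally show ?thesis by simp
qed

lemma lipschitz_l1_ge_near:
  fixes q :: "('a::finite \<Rightarrow> real) \<Rightarrow> real"
  assumes lip: "lipschitz_l1_on_pmfs L q" and f: "f \<in> pmfs" and c: "c < q f"
  obtains e where "0 < e" "\<And>g. g \<in> pmfs \<Longrightarrow> (\<And>a. \<bar>g a - f a\<bar> < e) \<Longrightarrow> c \<le> q g"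
proof
  define m where "m = \<bar>L\<bar> * real CARD('a)"
  have m0: "0 \<le> m" by (simp add: m_def)
  define e where "e = (q f - c) / (m + 1)"
  show e0: "0 < e" using c m0 by (simp add: e_def)
  fix g assume g: "g \<in> pmfs" and near: "\<And>a. \<bar>g a - f a\<bar> < e"
  have "l1dist g f \<le> (\<Sum>a\<in>(UNIV :: 'a set). e)"
    unfolding l1dist_def by (rule sum_mono) (simp add: less_imp_le near)
  then have l1: "l1dist g f \<le> real CARD('a) * e" by simp
  have "\<bar>q g - q f\<bar> \<le> L * l1dist g f" using lip g f by (simp add: lipschitz_l1_on_pmfs_def)
  also have "\<dots> \<le> \<bar>L\<bar> * l1dist g f"
    by (intro mult_right_mono abs_ge_self) (simp add: l1dist_def sum_nonneg)
  also have "\<dots> \<le> m * e"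
    using l1 by (simp add: m_def mult_left_mono mult.assoc)
  finally have "\<bar>q g - q f\<bar> \<le> m * e" .
  moreover have "m * e \<le> q f - c"
    using c m0 by (simp add: e_def field_simps)
  ultimately show "c \<le> q g" by linarith
qed

lemma emp_in_pmfs:
  assumes "i \<le> j"
  shows "emp \<omega> i j \<in> pmfs"
proof -
  have card_sum: "card {t\<in>A. P t} = (\<Sum>t\<in>A. if P t then 1 else 0)" if "finite A" for A :: "nat set" and P
    using that by (simp add: sum.inter_filter[symmetric])
  have "(\<Sum>a\<in>UNIV. card {t\<in>{i..j}. \<omega> t = a}) = (\<Sum>a\<in>UNIV. \<Sum>t\<in>{i..j}. if \<omega> t = a then 1 else 0)"
    by (intro sum.cong refl card_sum) simp
  also have "\<dots> = (\<Sum>t\<in>{i..j}. \<Sum>a\<in>UNIV. if \<omega> t = a then 1 else 0)" by (rule sum.swap)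
  also have "\<dots> = card {i..j}" by simp
  finally have "(\<Sum>a\<in>UNIV. real (card {t\<in>{i..j}. \<omega> t = a})) = real (Suc j - i)"
    by (metis card_atLeastAtMost of_nat_sum)
  moreover have "0 < Suc j - i" using assms by simp
  ultimately show ?thesis unfolding pmfs_def emp_def by (auto simp: sum_divide_distrib[symmetric])
qed

lemma emp_cong:
  assumes "\<And>t. t \<in> {i..j} \<Longrightarrow> \<omega> t = \<omega>' t"
  shows "emp \<omega> i j = emp \<omega>' i j"
proof -
  have "{t\<in>{i..j}. \<omega> t = a} = {t\<in>{i..j}. \<omega>' t = a}" for a using assms by auto
  then show ?thesis unfolding emp_def by presburger
qed

lemma Qstat_cong:
  assumes "\<And>t. t \<in> {i..j} \<Longrightarrow> \<omega> t = \<omega>' t"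
  shows "Qstat q \<omega> i j = Qstat q \<omega>' i j"
  using emp_cong[OF assms] by (simp add: Qstat_def)

lemma imax_is_argmax:
  assumes "tau \<le> Suc k"
  shows "tau \<le> imax q \<omega> tau k \<and> imax q \<omega> tau k \<le> Suc k \<and>
    (\<forall>j. tau \<le> j \<and> j \<le> Suc k \<longrightarrow> Qstat q \<omega> j k \<le> Qstat q \<omega> (imax q \<omega> tau k) k)"
proof -
  let ?Q = "\<lambda>j. Qstat q \<omega> j k"
  have fin: "finite (?Q ` {tau..Suc k})" by simp
  have ne: "?Q ` {tau..Suc k} \<noteq> {}" using assms by auto
  obtain i where i: "i \<in> {tau..Suc k}" "?Q i = Max (?Q ` {tau..Suc k})"
    using Max_in[OF fin ne] by auto
  then have "tau \<le> i \<and> i \<le> Suc k \<and> (\<forall>j. tau \<le> j \<and> j \<le> Suc k \<longrightarrow> ?Q j \<le> ?Q i)"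
    using fin by auto
  then show ?thesis unfolding imax_def by (rule LeastI)
qed

lemma Qstat_le_Sstat: "tau \<le> j \<Longrightarrow> j \<le> Suc k \<Longrightarrow> Qstat q \<omega> j k \<le> Sstat q \<omega> tau k"
  using imax_is_argmax[of tau k q \<omega>] by (simp add: Sstat_def)

section \<open>Deterministic behaviour of the IPT\<close>

text \<open>Block \<open>j\<close> occupies the observations \<open>1 + j(2T+1), \<dots>, (j+1)(2T+1)\<close>, which contain every
  window it inspects, so distinct blocks are independent. Block 0 inspects only the first window:
  this is what makes the leading term of the delay \<open>T\<close> rather than \<open>2T\<close>.\<close>

definition bad_block :: "(('a::finite \<Rightarrow> real) \<Rightarrow> real) \<Rightarrow> real \<Rightarrow> nat \<Rightarrow> nat \<Rightarrow> (nat \<Rightarrow> 'a) \<Rightarrow> bool"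
  where "bad_block q cS T j \<omega> \<longleftrightarrow>
    (if j = 0 then Qstat q \<omega> 1 T < cS
     else \<exists>r\<in>{1 + j * (2 * T + 1)..1 + j * (2 * T + 1) + T}. Qstat q \<omega> r (r + T - 1) < cS)"

lemma bad_block_cong:
  assumes "\<And>t. t \<in> {1 + j * (2 * T + 1)..<1 + (j + 1) * (2 * T + 1)} \<Longrightarrow> \<omega> t = \<omega>' t"
  shows "bad_block q cS T j \<omega> = bad_block q cS T j \<omega>'"
proof -
  have Q: "Qstat q \<omega> r (r + T - 1) = Qstat q \<omega>' r (r + T - 1)"
    if "j = 0 \<and> r = 1 \<or> r \<in> {1 + j * (2 * T + 1)..1 + j * (2 * T + 1) + T}" for r
    by (rule Qstat_cong, rule assms) (use that in \<open>auto simp: algebra_simps\<close>)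
  show ?thesis using Q[of 1] Q by (cases "j = 0") (auto simp: bad_block_def)
qed

context
  fixes q :: "('a::finite \<Rightarrow> real) \<Rightarrow> real" and f0 :: "'a \<Rightarrow> real" and cS K :: real
    and fs :: "nat \<Rightarrow> 'a \<Rightarrow> real" and cd :: "nat \<Rightarrow> real"
  assumes cS_pos: "0 < cS"
    and fs: "\<And>n. 1 \<le> n \<Longrightarrow> (\<exists>f\<in>pmfs. cS / real n \<le> q f) \<Longrightarrow> is_fstar q f0 cS n (fs n)"
    and cd_zero: "\<And>n. real n \<le> K \<Longrightarrow> cd n = 0"
begin

abbreviation "tau \<omega> k \<equiv> ipt_tau q fs cS cd \<omega> k"

lemma ipt_tau_ge_1: "1 \<le> tau \<omega> k"
  by (induction k) (auto simp: Let_def)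

lemma ipt_tau_le: "1 \<le> k \<Longrightarrow> tau \<omega> k \<le> k"
  by (induction k) (auto simp: Let_def)

lemma ipt_tau_idem: "tau \<omega> (tau \<omega> k) = tau \<omega> k"
  by (induction k) (auto simp: Let_def)

lemma window_of_Sstat_ge:
  assumes "t \<le> k" "cS \<le> Sstat q \<omega> t k"
  shows "nstat q \<omega> t k \<le> Suc k - t" "0 \<le> Dstat q fs \<omega> t k"
proof -
  let ?i = "imax q \<omega> t k"
  define n where "n = Suc k - ?i"
  have ti: "t \<le> ?i" using imax_is_argmax[of t k q \<omega>] assms(1) by simp
  have Q: "cS \<le> Qstat q \<omega> ?i k" using assms(2) by (simp add: Sstat_def)
  then have ik: "?i \<le> k" using cS_pos by (auto simp: Qstat_def split: if_splits)
  then have n1: "1 \<le> n" by (simp add: n_def)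
  show "nstat q \<omega> t k \<le> Suc k - t" using ti by (simp add: nstat_def)
  have emp: "emp \<omega> ?i k \<in> pmfs" using ik by (rule emp_in_pmfs)
  moreover have "cS / real n \<le> q (emp \<omega> ?i k)"
    using Q ik n1 by (simp add: Qstat_def n_def field_simps)
  \<comment> \<open>\<open>f\<^sup>*\<^sub>n\<close> exists because the empirical p.m.f. of the window itself meets its constraint.\<close>
  ultimately have "fs n \<in> pmfs" using fs[OF n1] by (auto simp: is_fstar_def)
  then show "0 \<le> Dstat q fs \<omega> t k"
    using emp by (simp add: Dstat_def nstat_def n_def KL_nonneg)
qed

lemma restart_imp_long_window:
  assumes "t \<le> k" "cS \<le> Sstat q \<omega> t k" "Dstat q fs \<omega> t k < ereal (cd (nstat q \<omega> t k))"
  shows "K < real (nstat q \<omega> t k)"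
proof (rule ccontr)
  assume "\<not> K < real (nstat q \<omega> t k)"
  then have "Dstat q fs \<omega> t k < 0" using assms(3) cd_zero by (simp add: zero_ereal_def)
  with window_of_Sstat_ge(2)[OF assms(1,2)] show False by simp
qed

lemma ipt_tau_stays:
  assumes "tau \<omega> s = s" "1 \<le> s" "real T \<le> K" "d < T"
  shows "tau \<omega> (s + d) = s"
  using assms(4)
proof (induction d)
  case 0
  then show ?case using assms(1) by simp
next
  case (Suc d)
  let ?k = "s + d"
  have tau: "tau \<omega> ?k = s" using Suc by simp
  have "\<not> (cS \<le> Sstat q \<omega> s ?k \<and> Dstat q fs \<omega> s ?k < ereal (cd (nstat q \<omega> s ?k)))"
  proof
    assume restart: "cS \<le> Sstat q \<omega> s ?k \<and> Dstat q fs \<omega> s ?k < ereal (cd (nstat q \<omega> s ?k))"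
    then have "K < real (nstat q \<omega> s ?k)" using restart_imp_long_window[of s ?k] by simp
    moreover have "nstat q \<omega> s ?k \<le> Suc ?k - s" using window_of_Sstat_ge(1)[of s ?k] restart by simp
    ultimately show False using Suc.prems assms(3) by simp
  qed
  then show ?case using assms(2) tau by (simp add: Let_def)
qed

lemma ipt_alarm_at_good_window_end:
  assumes "tau \<omega> s = s" "1 \<le> s" "1 \<le> T" "real T \<le> K" "cS \<le> Qstat q \<omega> s (s + T - 1)"
  shows "ipt_alarm q fs cS cd \<omega> (s + T - 1)"
proof -
  let ?k = "s + T - 1"
  have tau: "tau \<omega> ?k = s" using ipt_tau_stays[OF assms(1,2,4), of "T - 1"] assms(3) by simp
  have S: "cS \<le> Sstat q \<omega> s ?k"
    using order_trans[OF assms(5) Qstat_le_Sstat[of s s ?k]] by simp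
  have "nstat q \<omega> s ?k \<le> T" using window_of_Sstat_ge(1)[OF _ S] assms(3) by simp
  then have "cd (nstat q \<omega> s ?k) = 0" using assms(4) by (intro cd_zero) simp
  moreover have "0 \<le> Dstat q fs \<omega> s ?k" using window_of_Sstat_ge(2)[OF _ S] assms(3) by simp
  ultimately show ?thesis using S tau by (simp add: ipt_alarm_def zero_ereal_def[symmetric])
qed

lemma ipt_time_le_alarm:
  assumes "1 \<le> k" "ipt_alarm q fs cS cd \<omega> k"
  shows "ipt_time q fs cS cd \<omega> \<le> enat k"
proof -
  have "(LEAST k. 1 \<le> k \<and> ipt_alarm q fs cS cd \<omega> k) \<le> k" using assms by (intro Least_le) simp
  then show ?thesis using assms by (auto simp: ipt_time_def)
qed

lemma ipt_time_le_first_window: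
  assumes "1 \<le> T" "real T \<le> K" "cS \<le> Qstat q \<omega> 1 T"
  shows "ipt_time q fs cS cd \<omega> \<le> enat T"
  using ipt_alarm_at_good_window_end[of \<omega> 1 T] ipt_time_le_alarm[of T \<omega>] assms by simp

text \<open>If all windows starting in \<open>[a, a+T]\<close> are good, look at the window start \<open>s\<close> at time
  \<open>a+T-1\<close>. If \<open>s \<le> a\<close>, then \<open>S \<ge> Q(a, a+T-1) \<ge> c\<^sup>S\<close>: either the alarm is raised, or the procedure
  restarts at \<open>a+T\<close> and the good window there raises it. If \<open>s > a\<close>, the good window at the restart
  point \<open>s\<close> raises it.\<close>

lemma ipt_time_le_good_windows:
  assumes a: "1 \<le> a" and T: "1 \<le> T" "real T \<le> K"
    and good: "\<And>r. a \<le> r \<Longrightarrow> r \<le> a + T \<Longrightarrow> cS \<le> Qstat q \<omega> r (r + T - 1)"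
  shows "ipt_time q fs cS cd \<omega> \<le> enat (a + 2 * T - 1)"
proof -
  define k where "k = a + T - 1"
  define s where "s = tau \<omega> k"
  have k1: "1 \<le> k" using a T by (simp add: k_def)
  have sk: "s \<le> k" using ipt_tau_le[OF k1] by (simp add: s_def)
  show ?thesis
  proof (cases "s \<le> a")
    case True
    have S: "cS \<le> Sstat q \<omega> s k"
      using Qstat_le_Sstat[of s a k q \<omega>] good[of a] True T by (simp add: k_def)
    show ?thesis
    proof (cases "ipt_alarm q fs cS cd \<omega> k")
      case True
      then have "ipt_time q fs cS cd \<omega> \<le> enat k" using k1 by (intro ipt_time_le_alarm)
      then show ?thesis by (rule order_trans) (simp add: k_def)
    next
      case False
      then have "tau \<omega> (Suc k) = Suc k" using S k1 by (simp add: ipt_alarm_def Let_def s_def not_le)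
      moreover have "Suc k = a + T" using a T by (simp add: k_def)
      ultimately have "ipt_alarm q fs cS cd \<omega> (a + T + T - 1)"
        using good[of "a + T"] T a by (intro ipt_alarm_at_good_window_end) auto
      then have "ipt_time q fs cS cd \<omega> \<le> enat (a + T + T - 1)" using a T by (intro ipt_time_le_alarm) auto
      then show ?thesis by (metis mult_2 add.assoc)
    qed
  next
    case False
    have "ipt_alarm q fs cS cd \<omega> (s + T - 1)"
      using good[of s] False sk T ipt_tau_ge_1 ipt_tau_idem
      by (intro ipt_alarm_at_good_window_end) (auto simp: k_def s_def)
    then have "ipt_time q fs cS cd \<omega> \<le> enat (s + T - 1)"
      using ipt_tau_ge_1[of \<omega> k] T by (intro ipt_time_le_alarm) (auto simp: s_def)
    then show ?thesis by (rule order_trans) (use sk T in \<open>auto simp: k_def\<close>)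
  qed
qed

lemma ipt_time_le_good_block:
  assumes T: "1 \<le> T" "real T \<le> K" and good: "\<not> bad_block q cS T j \<omega>"
  shows "ipt_time q fs cS cd \<omega> \<le> enat (T + 2 * (2 * T + 1) * j)"
proof (cases "j = 0")
  case True
  then show ?thesis using ipt_time_le_first_window[OF T] good by (simp add: bad_block_def)
next
  case False
  let ?a = "1 + j * (2 * T + 1)"
  have "ipt_time q fs cS cd \<omega> \<le> enat (?a + 2 * T - 1)"
    using good False by (intro ipt_time_le_good_windows[OF _ T]) (auto simp: bad_block_def not_less)
  moreover have "?a + 2 * T - 1 \<le> T + 2 * (2 * T + 1) * j" using False by (cases j) auto
  ultimately show ?thesis by (meson enat_ord_simps(1) order_trans)
qed

lemma ipt_time_le_bad_blocks:
  assumes T: "1 \<le> T" "real T \<le> K"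
  shows "ennreal_of_enat (ipt_time q fs cS cd \<omega>)
    \<le> of_nat T + of_nat (2 * (2 * T + 1)) * (\<Sum>j. indicator {\<omega>. \<forall>i\<le>j. bad_block q cS T i \<omega>} \<omega>)"
proof -
  define C where "C j = {\<omega>. \<forall>i\<le>j. bad_block q cS T i \<omega>}" for j
  let ?N = "\<Sum>j. indicator (C j) \<omega> :: ennreal"
  have "ennreal_of_enat (ipt_time q fs cS cd \<omega>) \<le> of_nat T + of_nat (2 * (2 * T + 1)) * ?N"
  proof (cases "\<exists>j. \<not> bad_block q cS T j \<omega>")
    case True
    define j where "j = (LEAST j. \<not> bad_block q cS T j \<omega>)"
    have good: "\<not> bad_block q cS T j \<omega>" using True unfolding j_def by (rule LeastI_ex)
    have "bad_block q cS T i \<omega>" if "i < j" for i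
      using not_less_Least[OF that[unfolded j_def]] by simp
    then have "\<omega> \<in> C i'" if "i' < j" for i' using that by (auto simp: C_def)
    then have "(of_nat j :: ennreal) = (\<Sum>i'<j. indicator (C i') \<omega>)" by simp
    also have "\<dots> \<le> ?N" by (intro sum_le_suminf summableI) auto
    finally have N: "of_nat j \<le> ?N" .
    have "ennreal_of_enat (ipt_time q fs cS cd \<omega>) \<le> of_nat (T + 2 * (2 * T + 1) * j)"
      using ipt_time_le_good_block[OF T good] by (metis ennreal_of_enat_enat ennreal_of_enat_le_iff)
    also have "\<dots> = of_nat T + of_nat (2 * (2 * T + 1)) * of_nat j" by (simp only: of_nat_add of_nat_mult)
    also have "\<dots> \<le> of_nat T + of_nat (2 * (2 * T + 1)) * ?N"
      by (intro add_left_mono mult_left_mono N) simp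
    finally show ?thesis .
  next
    case False
    then have "?N = (\<Sum>j. ennreal 1)" by (simp add: C_def)
    also have "\<dots> = \<top>" by (rule summable_iff_suminf_neq_top) (auto simp: summable_const_iff)
    finally show ?thesis by (simp add: ennreal_mult_top)
  qed
  then show ?thesis by (simp only: C_def)
qed

end

section \<open>The i.i.d. observation law\<close>

lemma sets_PiM_finite_pmf:
  fixes p :: "'a::finite pmf"
  assumes "finite J"
  shows "{x\<in>space (PiM J (\<lambda>_. measure_pmf p)). P x} \<in> sets (PiM J (\<lambda>_. measure_pmf p))"
proof (rule sets.countable)
  fix x assume "x \<in> {x\<in>space (PiM J (\<lambda>_. measure_pmf p)). P x}"
  then have "{x} = PiE J (\<lambda>i. {x i})"
    by (auto simp: space_PiM PiE_iff extensional_def fun_eq_iff) metis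
  also have "\<dots> \<in> sets (PiM J (\<lambda>_. measure_pmf p))"
    using assms by (intro sets_PiM_I_countable) (auto intro: countable_finite)
  finally show "{x} \<in> sets (PiM J (\<lambda>_. measure_pmf p))" .
next
  have "finite (space (PiM J (\<lambda>_. measure_pmf p)))" using assms by (simp add: space_PiM finite_PiE)
  then show "countable {x\<in>space (PiM J (\<lambda>_. measure_pmf p)). P x}" by (simp add: countable_finite)
qed

context
  fixes f1 :: "'a::finite \<Rightarrow> real"
  assumes f1: "f1 \<in> pmfs"
begin

lemma pmf_embed_pmf_obs: "pmf (embed_pmf f1) a = f1 a"
proof (rule pmf_embed_pmf)
  show "0 \<le> f1 x" for x using f1 by (simp add: pmfs_def)
  have "(\<integral>\<^sup>+x. ennreal (f1 x) \<partial>count_space UNIV) = ennreal (\<Sum>x\<in>UNIV. f1 x)"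
    using f1 by (simp add: nn_integral_count_space_finite pmfs_def)
  then show "(\<integral>\<^sup>+x. ennreal (f1 x) \<partial>count_space UNIV) = 1" using f1 by (simp add: pmfs_def)
qed

interpretation obs: product_prob_space "\<lambda>_::nat. measure_pmf (embed_pmf f1)" UNIV
  by unfold_locales

lemma prob_space_obs_law: "prob_space (obs_law f1)"
  unfolding obs_law_def by (rule obs.prob_space_axioms)

lemma space_obs_law: "space (obs_law f1) = UNIV"
  by (simp add: obs_law_def space_PiM)

lemma measure_obs_law_coordinate: "measure (obs_law f1) {\<omega>. \<omega> t = a} = f1 a"
proof -
  have "emeasure (obs_law f1) {\<omega>. \<omega> t = a} = emeasure (measure_pmf (embed_pmf f1)) {a}"
    using obs.emeasure_PiM_Collect_single[of t "{a}"] by (simp add: obs_law_def space_PiM)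
  then show ?thesis using f1 by (simp add: measure_def emeasure_pmf_single pmf_embed_pmf_obs pmfs_def)
qed

lemma sets_obs_law_finite_dependence:
  assumes "finite J" and dep: "\<And>\<omega> \<omega>'. (\<And>t. t \<in> J \<Longrightarrow> \<omega> t = \<omega>' t) \<Longrightarrow> P \<omega> = P \<omega>'"
  shows "{\<omega>. P \<omega>} \<in> sets (obs_law f1)"
proof -
  let ?M = "PiM J (\<lambda>_. measure_pmf (embed_pmf f1))"
  have restrict: "P (restrict \<omega> J) = P \<omega>" for \<omega> by (rule dep) simp
  have "(\<lambda>\<omega>. restrict \<omega> J) \<in> measurable (obs_law f1) ?M"
    unfolding obs_law_def by (intro measurable_restrict measurable_component_singleton) auto
  then have "(\<lambda>\<omega>. restrict \<omega> J) -` {x\<in>space ?M. P x} \<inter> space (obs_law f1) \<in> sets (obs_law f1)"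
    using sets_PiM_finite_pmf[OF assms(1)] by (rule measurable_sets)
  also have "(\<lambda>\<omega>. restrict \<omega> J) -` {x\<in>space ?M. P x} \<inter> space (obs_law f1) = {\<omega>. P \<omega>}"
    by (auto simp: space_obs_law space_PiM restrict)
  finally show ?thesis .
qed

lemma indep_vars_obs_coordinates:
  "prob_space.indep_vars (obs_law f1) (\<lambda>_. measure_pmf (embed_pmf f1)) (\<lambda>i \<omega>. \<omega> i) UNIV"
proof -
  interpret prob_space "obs_law f1" by (rule prob_space_obs_law)
  have "distr (obs_law f1) (measure_pmf (embed_pmf f1)) (\<lambda>\<omega>. \<omega> i) = measure_pmf (embed_pmf f1)" for i
    unfolding obs_law_def by (rule obs.PiM_component) simp
  moreover have "(\<lambda>x::nat \<Rightarrow> 'a. \<lambda>i\<in>UNIV. x i) = (\<lambda>x. x)" by (auto simp: restrict_def)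
  ultimately show ?thesis
    by (subst indep_vars_iff_distr_eq_PiM) (auto simp: obs_law_def)
qed

lemma measure_obs_law_Inter_blocks:
  fixes B :: "nat \<Rightarrow> nat set"
  assumes disj: "disjoint_family B" and fin: "\<And>j. finite (B j)"
    and dep: "\<And>j \<omega> \<omega>'. (\<And>t. t \<in> B j \<Longrightarrow> \<omega> t = \<omega>' t) \<Longrightarrow> P j \<omega> = P j \<omega>'"
  shows "measure (obs_law f1) (\<Inter>j\<le>n. {\<omega>. P j \<omega>}) = (\<Prod>j\<le>n. measure (obs_law f1) {\<omega>. P j \<omega>})"
proof -
  interpret prob_space "obs_law f1" by (rule prob_space_obs_law)
  have "indep_vars (\<lambda>j. PiM (B j) (\<lambda>_. measure_pmf (embed_pmf f1))) (\<lambda>j \<omega>. restrict \<omega> (B j)) UNIV"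
    by (rule indep_vars_restrict[OF indep_vars_obs_coordinates])
      (use disj in \<open>auto simp: disjoint_family_on_def\<close>)
  then have "indep_events (\<lambda>j. {\<omega>\<in>space (obs_law f1). P j (restrict \<omega> (B j))}) UNIV"
    by (rule indep_eventsI_indep_vars) (rule sets_PiM_finite_pmf[OF fin])
  moreover have "P j (restrict \<omega> (B j)) = P j \<omega>" for j \<omega> by (rule dep) simp
  ultimately have "indep_events (\<lambda>j. {\<omega>. P j \<omega>}) UNIV" by (simp add: space_obs_law)
  then show ?thesis unfolding indep_events_def by (metis atMost_iff empty_iff finite_atMost le0 subset_UNIV)
qed

lemma window_count_deviation:
  assumes T: "1 \<le> T" and e: "0 \<le> e"
  shows "measure (obs_law f1) {\<omega>. real T * e \<le> \<bar>real (card {t\<in>{r..<r+T}. \<omega> t = a}) - real T * f1 a\<bar>}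
    \<le> 2 * exp (-2 * real T * e\<^sup>2)"
proof -
  interpret prob_space "obs_law f1" by (rule prob_space_obs_law)
  let ?X = "\<lambda>t \<omega>. if \<omega> t = a then 1 else (0::real)"
  have ind: "indep_vars (\<lambda>_. borel) ?X {r..<r+T}"
    by (rule indep_vars_compose2[OF indep_vars_subset[OF indep_vars_obs_coordinates]]) auto
  have exp: "expectation (?X t) = f1 a" for t
  proof -
    have "?X t = indicator {\<omega>. \<omega> t = a}" by (auto simp: fun_eq_iff)
    then show ?thesis by (simp add: space_obs_law measure_obs_law_coordinate)
  qed
  interpret Hoeffding_ineq "obs_law f1" "{r..<r+T}" ?X "\<lambda>_. 0" "\<lambda>_. 1" "real T * f1 a"
    by unfold_locales (simp_all add: ind exp)
  have count: "(\<Sum>t\<in>A. if P t then 1 else 0) = real (card {t\<in>A. P t})" if "finite A" for A :: "nat set" and P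
    using that by (simp add: sum.inter_filter[symmetric])
  have "prob {x\<in>space (obs_law f1). real T * e \<le> \<bar>(\<Sum>i\<in>{r..<r+T}. ?X i x) - real T * f1 a\<bar>}
      \<le> 2 * exp (-2 * (real T * e)\<^sup>2 / (\<Sum>i\<in>{r..<r+T}. (1 - 0)\<^sup>2))"
    using T e by (intro Hoeffding_ineq_abs_ge) auto
  also have "-2 * (real T * e)\<^sup>2 / (\<Sum>i\<in>{r..<r+T}. (1 - 0)\<^sup>2) = -2 * real T * e\<^sup>2"
    using T by (simp add: power2_eq_square field_simps)
  also have "{x\<in>space (obs_law f1). real T * e \<le> \<bar>(\<Sum>i\<in>{r..<r+T}. ?X i x) - real T * f1 a\<bar>}
      = {\<omega>. real T * e \<le> \<bar>real (card {t\<in>{r..<r+T}. \<omega> t = a}) - real T * f1 a\<bar>}"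
    by (simp add: space_obs_law count)
  finally show ?thesis .
qed

lemma window_emp_deviation:
  assumes T: "1 \<le> T" and e: "0 \<le> e"
  shows "measure (obs_law f1) {\<omega>. \<exists>a. e \<le> \<bar>emp \<omega> r (r + T - 1) a - f1 a\<bar>}
    \<le> 2 * real CARD('a) * exp (-2 * real T * e\<^sup>2)"
proof -
  let ?dev = "\<lambda>a \<omega>. real T * e \<le> \<bar>real (card {t\<in>{r..<r+T}. \<omega> t = a}) - real T * f1 a\<bar>"
  have eq: "{r..r + T - 1} = {r..<r+T}" and len: "Suc (r + T - 1) - r = T" using T by auto
  have Tp: "0 < real T" using T by simp
  have "emp \<omega> r (r + T - 1) a = real (card {t\<in>{r..<r+T}. \<omega> t = a}) / real T" for \<omega> :: "nat \<Rightarrow> 'a" and a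
    unfolding emp_def eq len by (rule refl)
  then have "emp \<omega> r (r + T - 1) a - f1 a = (real (card {t\<in>{r..<r+T}. \<omega> t = a}) - real T * f1 a) / real T"
    for \<omega> a using Tp by (simp add: diff_divide_distrib)
  then have "(e \<le> \<bar>emp \<omega> r (r + T - 1) a - f1 a\<bar>) = ?dev a \<omega>" for \<omega> a
    using Tp by (simp add: le_divide_eq mult.commute)
  then have "{\<omega>. \<exists>a. e \<le> \<bar>emp \<omega> r (r + T - 1) a - f1 a\<bar>} = (\<Union>a. {\<omega>. ?dev a \<omega>})" by auto
  also have "measure (obs_law f1) \<dots> \<le> (\<Sum>a\<in>UNIV. measure (obs_law f1) {\<omega>. ?dev a \<omega>})"
  proof (rule measure_UNION_le)
    fix a :: 'a
    show "{\<omega>. ?dev a \<omega>} \<in> sets (obs_law f1)"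
    proof (rule sets_obs_law_finite_dependence[of "{r..<r+T}"])
      fix \<omega> \<omega>' assume "\<And>t. t \<in> {r..<r+T} \<Longrightarrow> \<omega> t = (\<omega>' t :: 'a)"
      then have "{t\<in>{r..<r+T}. \<omega> t = a} = {t\<in>{r..<r+T}. \<omega>' t = a}" by auto
      then show "?dev a \<omega> = ?dev a \<omega>'" by simp
    qed simp
  qed simp
  also have "\<dots> \<le> (\<Sum>a\<in>(UNIV :: 'a set). 2 * exp (-2 * real T * e\<^sup>2))"
    by (intro sum_mono window_count_deviation T e)
  finally show ?thesis by simp
qed

end

section \<open>Bad blocks and the expected detection delay\<close>

context
  fixes q :: "('a::finite \<Rightarrow> real) \<Rightarrow> real" and f1 :: "'a \<Rightarrow> real" and cS e :: real and T :: nat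
    and \<beta> :: real
  defines \<beta>_def: "\<beta> \<equiv> 2 * real CARD('a) * exp (-2 * real T * e\<^sup>2)"
  assumes f1: "f1 \<in> pmfs" and T: "1 \<le> T" and e: "0 < e"
    and near: "\<And>g. g \<in> pmfs \<Longrightarrow> (\<And>a. \<bar>g a - f1 a\<bar> < e) \<Longrightarrow> cS \<le> real T * q g"
begin

lemma sets_Qstat_event: "{\<omega>. P (Qstat q \<omega> i j)} \<in> sets (obs_law f1)"
proof (rule sets_obs_law_finite_dependence[OF f1, of "{i..j}"])
  fix \<omega> \<omega>' :: "nat \<Rightarrow> 'a" assume "\<And>t. t \<in> {i..j} \<Longrightarrow> \<omega> t = \<omega>' t"
  then show "P (Qstat q \<omega> i j) = P (Qstat q \<omega>' i j)" by (subst Qstat_cong) auto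
qed simp

lemma sets_bad_block: "{\<omega>. bad_block q cS T j \<omega>} \<in> sets (obs_law f1)"
  by (rule sets_obs_law_finite_dependence[OF f1, of "{1 + j * (2 * T + 1)..<1 + (j + 1) * (2 * T + 1)}"])
    (simp, rule bad_block_cong, blast)

lemma bad_window_prob: "measure (obs_law f1) {\<omega>. Qstat q \<omega> r (r + T - 1) < cS} \<le> \<beta>"
proof -
  interpret prob_space "obs_law f1" by (rule prob_space_obs_law[OF f1])
  let ?D = "{\<omega>. \<exists>a. e \<le> \<bar>emp \<omega> r (r + T - 1) a - f1 a\<bar>}"
  have "{\<omega>. Qstat q \<omega> r (r + T - 1) < cS} \<subseteq> ?D"
  proof (rule subsetI, rule ccontr)
    fix \<omega> assume bad: "\<omega> \<in> {\<omega>. Qstat q \<omega> r (r + T - 1) < cS}" and "\<omega> \<notin> ?D"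
    then have "cS \<le> real T * q (emp \<omega> r (r + T - 1))"
      using T by (intro near emp_in_pmfs) (auto simp: not_le)
    moreover have "Qstat q \<omega> r (r + T - 1) = real T * q (emp \<omega> r (r + T - 1))"
      using T by (cases T) (simp_all add: Qstat_def)
    ultimately show False using bad by simp
  qed
  moreover have "?D \<in> sets (obs_law f1)"
  proof (rule sets_obs_law_finite_dependence[OF f1, of "{r..r + T - 1}"])
    fix \<omega> \<omega>' :: "nat \<Rightarrow> 'a" assume "\<And>t. t \<in> {r..r + T - 1} \<Longrightarrow> \<omega> t = \<omega>' t"
    then have "emp \<omega> r (r + T - 1) = emp \<omega>' r (r + T - 1)" by (rule emp_cong)
    then show "(\<exists>a. e \<le> \<bar>emp \<omega> r (r + T - 1) a - f1 a\<bar>) = (\<exists>a. e \<le> \<bar>emp \<omega>' r (r + T - 1) a - f1 a\<bar>)"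
      by simp
  qed simp
  ultimately have "measure (obs_law f1) {\<omega>. Qstat q \<omega> r (r + T - 1) < cS} \<le> measure (obs_law f1) ?D"
    by (rule finite_measure_mono)
  also have "\<dots> \<le> \<beta>" unfolding \<beta>_def using window_emp_deviation[OF f1 T] e by simp
  finally show ?thesis .
qed

lemma bad_block_prob:
  "measure (obs_law f1) {\<omega>. bad_block q cS T j \<omega>} \<le> (if j = 0 then \<beta> else real (T + 1) * \<beta>)"
proof (cases "j = 0")
  case True
  then show ?thesis using bad_window_prob[of 1] by (simp add: bad_block_def)
next
  case False
  let ?R = "{1 + j * (2 * T + 1)..1 + j * (2 * T + 1) + T}"
  have "{\<omega>. bad_block q cS T j \<omega>} = (\<Union>r\<in>?R. {\<omega>. Qstat q \<omega> r (r + T - 1) < cS})"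
    using False by (auto simp: bad_block_def)
  also have "measure (obs_law f1) \<dots> \<le> (\<Sum>r\<in>?R. measure (obs_law f1) {\<omega>. Qstat q \<omega> r (r + T - 1) < cS})"
    by (intro measure_UNION_le sets_Qstat_event) auto
  also have "\<dots> \<le> (\<Sum>r\<in>?R. \<beta>)" by (intro sum_mono bad_window_prob)
  finally show ?thesis using False by simp
qed

lemma measure_leading_bad_blocks:
  "measure (obs_law f1) {\<omega>. \<forall>i\<le>j. bad_block q cS T i \<omega>} \<le> \<beta> * (real (T + 1) * \<beta>) ^ j"
proof -
  define B where "B j = {1 + j * (2 * T + 1)..<1 + (j + 1) * (2 * T + 1)}" for j
  have disj: "disjoint_family B"
    unfolding disjoint_family_on_def
  proof (intro ballI impI)
    have disj: "B i \<inter> B j = {}" if "i < j" for i j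
    proof -
      have "(i + 1) * (2 * T + 1) \<le> j * (2 * T + 1)" using that by (intro mult_le_mono1) simp
      then show ?thesis by (auto simp: B_def)
    qed
    fix i j :: nat assume "i \<noteq> j"
    then show "B i \<inter> B j = {}" using disj[of i j] disj[of j i] by (auto simp: nat_neq_iff)
  qed
  have fin: "finite (B j)" for j by (simp add: B_def)
  have dep: "bad_block q cS T j \<omega> = bad_block q cS T j \<omega>'"
    if "\<And>t. t \<in> B j \<Longrightarrow> \<omega> t = \<omega>' t" for j \<omega> \<omega>'
    using that unfolding B_def by (rule bad_block_cong)
  have "{\<omega>. \<forall>i\<le>j. bad_block q cS T i \<omega>} = (\<Inter>i\<le>j. {\<omega>. bad_block q cS T i \<omega>})" by auto
  then have "measure (obs_law f1) {\<omega>. \<forall>i\<le>j. bad_block q cS T i \<omega>}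
      = (\<Prod>i\<le>j. measure (obs_law f1) {\<omega>. bad_block q cS T i \<omega>})"
    using measure_obs_law_Inter_blocks[OF f1 disj fin dep] by simp
  also have "\<dots> \<le> (\<Prod>i\<le>j. if i = 0 then \<beta> else real (T + 1) * \<beta>)"
    by (intro prod_mono conjI bad_block_prob) simp
  also have "\<dots> = \<beta> * (real (T + 1) * \<beta>) ^ j"
    by (induction j) (simp_all add: mult_ac)
  finally show ?thesis .
qed

lemma ipt_expected_time_le:
  assumes cS: "0 < cS"
    and fs: "\<And>n. 1 \<le> n \<Longrightarrow> (\<exists>f\<in>pmfs. cS / real n \<le> q f) \<Longrightarrow> is_fstar q f0 cS n (fs n)"
    and cd_zero: "\<And>n. real n \<le> K \<Longrightarrow> cd n = 0"
    and TK: "real T \<le> K" and small: "real (T + 1) * \<beta> < 1"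
  shows "(\<integral>\<^sup>+\<omega>. ennreal_of_enat (ipt_time q fs cS cd \<omega>) \<partial>obs_law f1)
    \<le> ennreal (real T + 2 * (2 * real T + 1) * \<beta> / (1 - real (T + 1) * \<beta>))"
proof -
  interpret prob_space "obs_law f1" by (rule prob_space_obs_law[OF f1])
  define \<eta> where "\<eta> = real (T + 1) * \<beta>"
  define C where "C j = {\<omega>. \<forall>i\<le>j. bad_block q cS T i \<omega>}" for j
  define W where "W = 2 * (2 * T + 1)"
  have \<beta>: "0 \<le> \<beta>" and \<eta>: "0 \<le> \<eta>" "\<eta> < 1" using small by (simp_all add: \<beta>_def \<eta>_def)
  have C: "C j \<in> sets (obs_law f1)" for j
  proof -
    have "C j = (\<Inter>i\<le>j. {\<omega>. bad_block q cS T i \<omega>})" by (auto simp: C_def)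
    then show ?thesis using sets_bad_block by auto
  qed
  have "(\<integral>\<^sup>+\<omega>. ennreal_of_enat (ipt_time q fs cS cd \<omega>) \<partial>obs_law f1)
      \<le> (\<integral>\<^sup>+\<omega>. of_nat T + of_nat W * (\<Sum>j. indicator (C j) \<omega>) \<partial>obs_law f1)"
    unfolding C_def W_def
    by (intro nn_integral_mono ipt_time_le_bad_blocks[OF cS fs cd_zero T TK])
  also have "\<dots> = of_nat T + of_nat W * (\<Sum>j. emeasure (obs_law f1) (C j))"
    using C by (simp add: nn_integral_add nn_integral_cmult nn_integral_suminf emeasure_space_1)
  also have "(\<Sum>j. emeasure (obs_law f1) (C j)) \<le> (\<Sum>j. ennreal (\<beta> * \<eta> ^ j))"
    using measure_leading_bad_blocks
    by (intro suminf_le summableI) (auto simp: emeasure_eq_measure C_def \<eta>_def intro: ennreal_leI)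
  also have "(\<Sum>j. ennreal (\<beta> * \<eta> ^ j)) = ennreal (\<beta> / (1 - \<eta>))"
    using \<beta> \<eta> by (simp add: suminf_ennreal2 summable_geometric suminf_geometric suminf_mult)
  finally have "(\<integral>\<^sup>+\<omega>. ennreal_of_enat (ipt_time q fs cS cd \<omega>) \<partial>obs_law f1)
      \<le> ennreal (real T) + ennreal (real W) * ennreal (\<beta> / (1 - \<eta>))"
    by (simp add: mult_left_mono add_left_mono ennreal_of_nat_eq_real_of_nat)
  also have "\<dots> = ennreal (real T + real W * (\<beta> / (1 - \<eta>)))"
    using \<beta> \<eta> by (simp add: ennreal_mult del: times_divide_eq_right)
  also have "real T + real W * (\<beta> / (1 - \<eta>)) = real T + 2 * (2 * real T + 1) * \<beta> / (1 - real (T + 1) * \<beta>)"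
    by (simp add: W_def \<eta>_def)
  finally show ?thesis .
qed

end

section \<open>Asymptotics\<close>

lemma filterlim_nat_ceiling_divide_at_top:
  assumes "0 < (c::real)"
  shows "filterlim (\<lambda>x. real (nat \<lceil>x / c\<rceil>)) at_top at_top"
proof -
  have "filterlim (\<lambda>x. x / c) at_top at_top" using assms by real_asymp
  then show ?thesis by (rule filterlim_at_top_mono) (simp add: real_nat_ceiling_ge)
qed

lemma tendsto_nat_ceiling_divide_ratio:
  fixes c :: real and g :: "real \<Rightarrow> real"
  assumes c: "0 < c" and g: "(g \<longlongrightarrow> 0) at_top"
  shows "((\<lambda>x. (real (nat \<lceil>x / c\<rceil>) + g (real (nat \<lceil>x / c\<rceil>))) / x) \<longlongrightarrow> 1 / c) at_top"
proof -
  let ?T = "\<lambda>x. real (nat \<lceil>x / c\<rceil>)"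
  have "((\<lambda>x. ?T x / x) \<longlongrightarrow> 1 / c) at_top"
  proof (rule tendsto_sandwich)
    show "\<forall>\<^sub>F x in at_top. 1 / c \<le> ?T x / x"
      using eventually_gt_at_top[of 0]
      by eventually_elim (use real_nat_ceiling_ge c in \<open>simp add: field_simps\<close>)
    have T_le: "?T x \<le> x / c + 1" if "0 < x" for x using that c by simp
    show "\<forall>\<^sub>F x in at_top. ?T x / x \<le> 1 / c + 1 / x"
      using eventually_gt_at_top[of 0] by eventually_elim (use T_le c in \<open>simp add: field_simps\<close>)
    show "((\<lambda>x. 1 / c + 1 / x) \<longlongrightarrow> 1 / c) at_top"
      using tendsto_add[OF tendsto_const tendsto_inverse_0_at_top[OF filterlim_ident], of "1 / c"]
      by (simp add: inverse_eq_divide)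
  qed (rule tendsto_const)
  moreover have "((\<lambda>x. g (?T x) * inverse x) \<longlongrightarrow> 0 * 0) at_top"
    using filterlim_nat_ceiling_divide_at_top[OF c]
    by (intro tendsto_mult filterlim_compose[OF g] tendsto_inverse_0_at_top filterlim_ident)
  ultimately have "((\<lambda>x. ?T x / x + g (?T x) * inverse x) \<longlongrightarrow> 1 / c + 0 * 0) at_top"
    by (rule tendsto_add)
  moreover have "(\<lambda>x. (?T x + g (?T x)) / x) = (\<lambda>x. ?T x / x + g (?T x) * inverse x)"
    by (rule ext) (simp only: divide_inverse distrib_right)
  ultimately show ?thesis by (simp only: mult_zero_left add_0_right)
qed

lemma Limsup_ipt_time_ratio_le:
  fixes q :: "('a::finite \<Rightarrow> real) \<Rightarrow> real" and f0 f1 :: "'a \<Rightarrow> real" and c e \<kappa> :: real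
    and fstar :: "real \<Rightarrow> nat \<Rightarrow> 'a \<Rightarrow> real" and cD :: "real \<Rightarrow> nat \<Rightarrow> real"
  assumes f1: "f1 \<in> pmfs" and c: "0 < c" and e: "0 < e" and \<kappa>: "1 / c < \<kappa>"
    and near: "\<And>g. g \<in> pmfs \<Longrightarrow> (\<And>a. \<bar>g a - f1 a\<bar> < e) \<Longrightarrow> c \<le> q g"
    and fstar: "\<And>cS n. 0 < cS \<Longrightarrow> 1 \<le> n \<Longrightarrow> (\<exists>f\<in>pmfs. cS / real n \<le> q f) \<Longrightarrow>
      is_fstar q f0 cS n (fstar cS n)"
    and cD_zero: "\<And>cS n. 0 < cS \<Longrightarrow> real n \<le> \<kappa> * cS \<Longrightarrow> cD cS n = 0"
  shows "Limsup at_top (\<lambda>cS. (\<integral>\<^sup>+\<omega>. ennreal_of_enat (ipt_time q (fstar cS) cS (cD cS) \<omega>) \<partial>obs_law f1)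
    / ennreal cS) \<le> ennreal (1 / c)"
proof -
  define \<beta> where "\<beta> t = 2 * real CARD('a) * exp (-2 * t * e\<^sup>2)" for t :: real
  define g where "g t = 2 * (2 * t + 1) * \<beta> t / (1 - (t + 1) * \<beta> t)" for t :: real
  define T where "T cS = nat \<lceil>cS / c\<rceil>" for cS :: real
  have T_ge: "cS / c \<le> real (T cS)" for cS unfolding T_def by (rule real_nat_ceiling_ge)
  have "((\<lambda>t. (t + 1) * \<beta> t) \<longlongrightarrow> 0) at_top" unfolding \<beta>_def using e by real_asymp
  then have "\<forall>\<^sub>F t in at_top. (t + 1) * \<beta> t < 1" by (rule order_tendstoD) simp
  then have small: "\<forall>\<^sub>F cS in at_top. (real (T cS) + 1) * \<beta> (real (T cS)) < 1"
    unfolding T_def by (rule eventually_compose_filterlim[OF _ filterlim_nat_ceiling_divide_at_top[OF c]])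
  have T_le: "real (T cS) \<le> cS / c + 1" if "0 < cS" for cS using that c by (simp add: T_def)
  have long: "\<forall>\<^sub>F cS in at_top. real (T cS) \<le> \<kappa> * cS"
  proof (rule eventually_mono[OF eventually_ge_at_top[of "1 / (\<kappa> - 1 / c)"]])
    fix cS assume cS: "1 / (\<kappa> - 1 / c) \<le> cS"
    moreover have "0 < 1 / (\<kappa> - 1 / c)" using \<kappa> by simp
    ultimately have "0 < cS" by linarith
    moreover have "1 \<le> (\<kappa> - 1 / c) * cS" using cS \<kappa> by (simp add: divide_le_eq mult.commute)
    ultimately show "real (T cS) \<le> \<kappa> * cS" using T_le[of cS] by (simp add: algebra_simps)
  qed
  have near_T: "cS \<le> real (T cS) * q h" if "0 < cS" "h \<in> pmfs" "\<And>a. \<bar>h a - f1 a\<bar> < e" for cS h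
  proof -
    have "cS = cS / c * c" using c by simp
    also have "\<dots> \<le> real (T cS) * q h" using T_ge near[OF that(2,3)] c that(1) by (intro mult_mono) auto
    finally show ?thesis .
  qed
  have "\<forall>\<^sub>F cS in at_top. (\<integral>\<^sup>+\<omega>. ennreal_of_enat (ipt_time q (fstar cS) cS (cD cS) \<omega>) \<partial>obs_law f1)
      / ennreal cS \<le> ennreal ((real (T cS) + g (real (T cS))) / cS)"
    using small long eventually_gt_at_top[of 0]
  proof eventually_elim
    case (elim cS)
    have "(\<integral>\<^sup>+\<omega>. ennreal_of_enat (ipt_time q (fstar cS) cS (cD cS) \<omega>) \<partial>obs_law f1)
        \<le> ennreal (real (T cS) + 2 * (2 * real (T cS) + 1) * \<beta> (real (T cS))
          / (1 - real (T cS + 1) * \<beta> (real (T cS))))"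
      unfolding \<beta>_def
    proof (rule ipt_expected_time_le[OF f1 _ e near_T[OF elim(3)] elim(3) fstar[OF elim(3)] cD_zero[OF elim(3)]])
      have "0 < real (T cS)" using T_ge[of cS] elim(3) c by (meson divide_pos_pos less_le_trans)
      then show "1 \<le> T cS" by simp
      show "real (T cS + 1) * (2 * real CARD('a) * exp (- 2 * real (T cS) * e\<^sup>2)) < 1"
        using elim(1) by (simp add: \<beta>_def add.commute)
      show "real (T cS) \<le> \<kappa> * cS" by (fact elim(2))
    qed
    then have "(\<integral>\<^sup>+\<omega>. ennreal_of_enat (ipt_time q (fstar cS) cS (cD cS) \<omega>) \<partial>obs_law f1)
        \<le> ennreal (real (T cS) + g (real (T cS)))"
      by (simp add: g_def add.commute)
    then have "(\<integral>\<^sup>+\<omega>. ennreal_of_enat (ipt_time q (fstar cS) cS (cD cS) \<omega>) \<partial>obs_law f1) / ennreal cS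
        \<le> ennreal (real (T cS) + g (real (T cS))) / ennreal cS"
      by (rule divide_right_mono_ennreal)
    also have "\<dots> = ennreal ((real (T cS) + g (real (T cS))) / cS)"
      using elim(1,3) by (intro divide_ennreal) (simp_all add: g_def \<beta>_def)
    finally show ?case .
  qed
  then have "Limsup at_top (\<lambda>cS. (\<integral>\<^sup>+\<omega>. ennreal_of_enat (ipt_time q (fstar cS) cS (cD cS) \<omega>) \<partial>obs_law f1)
      / ennreal cS) \<le> Limsup at_top (\<lambda>cS. ennreal ((real (T cS) + g (real (T cS))) / cS))"
    by (rule Limsup_mono)
  also have "\<dots> = ennreal (1 / c)"
  proof (rule lim_imp_Limsup)
    have "(g \<longlongrightarrow> 0) at_top" unfolding g_def \<beta>_def using e by real_asymp
    then show "((\<lambda>cS. ennreal ((real (T cS) + g (real (T cS))) / cS)) \<longlongrightarrow> ennreal (1 / c)) at_top"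
      unfolding T_def by (intro tendsto_ennrealI tendsto_nat_ceiling_divide_ratio c)
  qed simp
  finally show ?thesis .
qed

theorem lemma3:
  fixes q :: "('a::finite \<Rightarrow> real) \<Rightarrow> real"
    and L qbar rho :: real
    and f0 f1 :: "'a \<Rightarrow> real"
    and P1 :: "('a \<Rightarrow> real) set"
    and fstar :: "real \<Rightarrow> nat \<Rightarrow> 'a \<Rightarrow> real"
    and cD :: "real \<Rightarrow> nat \<Rightarrow> real"
  assumes qc: "quasiconcave_on_pmfs q"
    and lip: "lipschitz_l1_on_pmfs L q"
    and f0: "f0 \<in> pmfs"
    and q0: "q f0 < 0" and qbar: "0 < qbar"
    and P1ne: "P1 \<noteq> {}"
    and P1sub: "P1 \<subseteq> {f\<in>pmfs. qbar \<le> q f}"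
    and fstar: "\<And>cS n. 0 < cS \<Longrightarrow> 1 \<le> n \<Longrightarrow> (\<exists>f\<in>pmfs. cS / real n \<le> q f) \<Longrightarrow>
                   is_fstar q f0 cS n (fstar cS n)"
    and rho: "0 < rho"
    and cD_nonneg: "\<And>cS n. 0 < cS \<Longrightarrow> 0 \<le> cD cS n"
    and cD_zero: "\<And>cS n. 0 < cS \<Longrightarrow> real n \<le> (1 + rho) * cS / qbar \<Longrightarrow> cD cS n = 0"
    and f1: "f1 \<in> P1"
  shows "Limsup at_top (\<lambda>cS::real.
            (\<integral>\<^sup>+ \<omega>. ennreal_of_enat (ipt_time q (fstar cS) cS (cD cS) \<omega>) \<partial>obs_law f1)
              / ennreal cS)
         \<le> ennreal (1 / q f1)"
proof -
  let ?F = "\<lambda>cS. (\<integral>\<^sup>+ \<omega>. ennreal_of_enat (ipt_time q (fstar cS) cS (cD cS) \<omega>) \<partial>obs_law f1) / ennreal cS"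
  have f1_pmf: "f1 \<in> pmfs" and qbar_le: "qbar \<le> q f1" using f1 P1sub by auto
  have q1: "0 < q f1" using qbar qbar_le by simp
  have "Limsup at_top ?F \<le> ennreal (1 / c)" if c: "c \<in> {q f1 / (1 + rho)<..<q f1}" for c
  proof -
    obtain e where e: "0 < e" and near: "\<And>g. g \<in> pmfs \<Longrightarrow> (\<And>a. \<bar>g a - f1 a\<bar> < e) \<Longrightarrow> c \<le> q g"
      using lipschitz_l1_ge_near[OF lip f1_pmf] c by auto
    have "0 < q f1 / (1 + rho)" using q1 rho by simp
    then have c0: "0 < c" using c by simp
    have "1 / c < (1 + rho) / q f1" using c c0 q1 rho by (simp add: field_simps)
    also have "\<dots> \<le> (1 + rho) / qbar" using qbar qbar_le rho by (intro divide_left_mono) auto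
    finally have \<kappa>: "1 / c < (1 + rho) / qbar" .
    show ?thesis
      using cD_zero by (intro Limsup_ipt_time_ratio_le[OF f1_pmf c0 e \<kappa> near fstar]) (simp_all add: field_simps)
  qed
  then have ev: "\<forall>\<^sub>F c in at_left (q f1). Limsup at_top ?F \<le> ennreal (1 / c)"
    using eventually_at_left_real[of "q f1 / (1 + rho)" "q f1"] q1 rho
    by (auto elim!: eventually_mono simp: field_simps)
  have "((\<lambda>c. ennreal (1 / c)) \<longlongrightarrow> ennreal (1 / q f1)) (at_left (q f1))"
    using q1 by (intro tendsto_ennrealI tendsto_divide tendsto_const tendsto_ident_at) auto
  then show ?thesis using ev trivial_limit_at_left_real by (rule tendsto_lowerbound)
qed

end
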